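(* Let $M$ be a 3-dimensional contact Sub-Riemannian manifold and $W=\{F=0\}$ a $\Delta$-minimal surface, $F\in C^2$, $dF\ne0$. Then the characteristic points of $W$ are either isolated or contained in a $C^1$ curve consisting of characteristic points.
   Context: $M$ is a smooth 3-manifold with a contact rank-2 distribution $\Delta$ with orthonormal frame $X_1,X_2$, canonical 1-form $\omega$ ($\omega(\Delta)=0$, $d\omega(X_1,X_2)=1$), Reeb field $X_3$ ($\omega(X_3)=1$, $d\omega(V,X_3)=0$ for $V\in\Delta$), structure functions $[X_i,X_j]=-\sum_kc_{ij}^kX_k$. A characteristic point of $W$ is a point where $X_1F=X_2F=0$ (i.e. $T_qW=\Delta_q$). $W$ is $\Delta$-minimal if, at all points of $W$ where $D_1=\sqrt{(X_1F)^2+(X_2F)^2}\ne0$, $\big(X_1^2F(X_2F)^2+X_2^2F(X_1F)^2-X_1FX_2F(X_1X_2+X_2X_1)F\big)D_1^{-3}+(c_{12}^2X_1F-c_{12}^1X_2F)D_1^{-1}=0$. *)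

theory Defs
  imports "HOL-Analysis.Analysis"
begin

fun Ck_on :: "nat \<Rightarrow> 'a::real_normed_vector set \<Rightarrow> ('a \<Rightarrow> 'b::real_normed_vector) \<Rightarrow> bool" where
  "Ck_on 0 U f = continuous_on U f"
| "Ck_on (Suc k) U f =
     (f differentiable_on U \<and> (\<forall>v. Ck_on k U (\<lambda>x. frechet_derivative f (at x) v)))"

definition smooth_on :: "'a::real_normed_vector set \<Rightarrow> ('a \<Rightarrow> 'b::real_normed_vector) \<Rightarrow> bool" where
  "smooth_on U f \<longleftrightarrow> (\<forall>k. Ck_on k U f)"

definition vf_apply :: "(real^3 \<Rightarrow> real^3) \<Rightarrow> (real^3 \<Rightarrow> real) \<Rightarrow> real^3 \<Rightarrow> real" where
  "vf_apply X g p = frechet_derivative g (at p) (X p)"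

text \<open>Lie bracket [X,Y], so that [X,Y]g = X(Y g) - Y(X g).\<close>
definition lie_bracket :: "(real^3 \<Rightarrow> real^3) \<Rightarrow> (real^3 \<Rightarrow> real^3) \<Rightarrow> real^3 \<Rightarrow> real^3" where
  "lie_bracket X Y p = frechet_derivative Y (at p) (X p) - frechet_derivative X (at p) (Y p)"

text \<open>A 1-form is represented by a covector field w (w_p(V) = w p \<bullet> V);
  its exterior derivative evaluated on V, Wv at p.\<close>
definition dform :: "(real^3 \<Rightarrow> real^3) \<Rightarrow> real^3 \<Rightarrow> real^3 \<Rightarrow> real^3 \<Rightarrow> real" where
  "dform w p V Wv = (frechet_derivative w (at p) V) \<bullet> Wv - (frechet_derivative w (at p) Wv) \<bullet> V"

text \<open>Delta-minimality of W = {F = 0} (within U), with c1 = c_12^1, c2 = c_12^2.\<close>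
definition Delta_minimal ::
  "(real^3) set \<Rightarrow> (real^3 \<Rightarrow> real^3) \<Rightarrow> (real^3 \<Rightarrow> real^3) \<Rightarrow> (real^3 \<Rightarrow> real) \<Rightarrow> (real^3 \<Rightarrow> real)
   \<Rightarrow> (real^3 \<Rightarrow> real) \<Rightarrow> bool" where
  "Delta_minimal U X1 X2 c1 c2 F \<longleftrightarrow>
     (\<forall>p\<in>U. F p = 0 \<longrightarrow>
        (let a = vf_apply X1 F p; b = vf_apply X2 F p; D1 = sqrt (a\<^sup>2 + b\<^sup>2) in
          D1 \<noteq> 0 \<longrightarrow>
          (vf_apply X1 (vf_apply X1 F) p * b\<^sup>2 + vf_apply X2 (vf_apply X2 F) p * a\<^sup>2
            - a * b * (vf_apply X1 (vf_apply X2 F) p + vf_apply X2 (vf_apply X1 F) p)) / D1 ^ 3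
          + (c2 p * a - c1 p * b) / D1 = 0))"

definition char_points :: "(real^3) set \<Rightarrow> (real^3 \<Rightarrow> real^3) \<Rightarrow> (real^3 \<Rightarrow> real^3) \<Rightarrow> (real^3 \<Rightarrow> real) \<Rightarrow> (real^3) set" where
  "char_points U X1 X2 F = {p\<in>U. F p = 0 \<and> vf_apply X1 F p = 0 \<and> vf_apply X2 F p = 0}"

end

theory Submission
  imports Defs
begin

text \<open>At a characteristic point \<open>q\<close> the horizontal gradient \<open>(X\<^sub>1F, X\<^sub>2F)\<close> vanishes, so
  \<open>X\<^sub>2X\<^sub>1F - X\<^sub>1X\<^sub>2F = [X\<^sub>2, X\<^sub>1]F = X\<^sub>3F \<noteq> 0\<close> there: the \<open>X\<^sub>3\<close>-coefficient of \<open>[X\<^sub>2, X\<^sub>1]\<close> is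
  \<open>d\<omega>(X\<^sub>1, X\<^sub>2) = 1\<close>, and \<open>dF \<noteq> 0\<close>. So the horizontal Hessian \<open>K = (X\<^sub>jX\<^sub>iF)(q)\<close> is not
  symmetric.

  If \<open>det K \<noteq> 0\<close>, then \<open>(F, X\<^sub>1F, X\<^sub>2F)\<close> is a local diffeomorphism at \<open>q\<close>, and \<open>q\<close> is an isolated
  common zero.

  If \<open>det K = 0\<close>, the quadratic form \<open>(x, y) \<mapsto> K\<^sub>1\<^sub>1y\<^sup>2 + K\<^sub>2\<^sub>2x\<^sup>2 - xy(K\<^sub>1\<^sub>2 + K\<^sub>2\<^sub>1)\<close>, i.e. the
  numerator of the minimality equation, is not identically zero. Fix \<open>(x, y)\<close> where it is
  nonzero. At a point of \<open>W\<close> where the horizontal gradient equals \<open>s(x, y)\<close> with \<open>s \<noteq> 0\<close>, the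
  minimality equation says that this numerator is \<open>O(s)\<close>; near \<open>q\<close>, however, it stays close
  to its nonzero value at \<open>q\<close>. So near \<open>q\<close> the set \<open>{F = 0, yX\<^sub>1F - xX\<^sub>2F = 0}\<close> consists of
  characteristic points. This set is a regular \<open>C\<^sup>1\<close> curve, because the nonvanishing of the form
  makes the derivative of \<open>yX\<^sub>1F - xX\<^sub>2F\<close> transversal to \<open>\<Delta>\<close>, and it contains every nearby
  characteristic point.\<close>

definition C1_on :: "'a::real_normed_vector set \<Rightarrow> ('a \<Rightarrow> 'b::real_normed_vector) \<Rightarrow> ('a \<Rightarrow> 'a \<Rightarrow> 'b) \<Rightarrow> bool"
  where "C1_on U f f' \<longleftrightarrow> (\<forall>x\<in>U. (f has_derivative f' x) (at x)) \<and> (\<forall>v. continuous_on U (\<lambda>x. f' x v))"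

lemma C1_onD:
  assumes "C1_on U f f'"
  shows C1_on_has_derivative: "x \<in> U \<Longrightarrow> (f has_derivative f' x) (at x)"
    and C1_on_continuous_on_derivative: "continuous_on U (\<lambda>x. f' x v)"
  using assms unfolding C1_on_def by blast+

lemma C1_on_linear: "C1_on U f f' \<Longrightarrow> x \<in> U \<Longrightarrow> linear (f' x)"
  using C1_on_has_derivative has_derivative_linear by blast

lemma C1_on_frechet_derivative_eq: "C1_on U f f' \<Longrightarrow> x \<in> U \<Longrightarrow> frechet_derivative f (at x) = f' x"
  by (metis C1_on_has_derivative frechet_derivative_at)

lemma C1_on_imp_continuous_on: "C1_on U f f' \<Longrightarrow> open U \<Longrightarrow> continuous_on U f"
  by (meson C1_on_has_derivative continuous_at_imp_continuous_on has_derivative_continuous)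

lemma C1_on_if_Ck_on_1:
  assumes "open U" "Ck_on 1 U f"
  shows "C1_on U f (\<lambda>x. frechet_derivative f (at x))"
  using assms by (auto simp: C1_on_def differentiable_on_eq_differentiable_at frechet_derivative_works)

lemma C1_on_if_Ck_on_2:
  fixes F :: "'a::real_normed_vector \<Rightarrow> 'b::real_normed_vector"
  assumes "open U" "Ck_on 2 U F"
  shows "C1_on U F (\<lambda>x. frechet_derivative F (at x))"
    and "C1_on U (\<lambda>y. frechet_derivative F (at y) v)
           (\<lambda>x. frechet_derivative (\<lambda>y. frechet_derivative F (at y) v) (at x))"
proof -
  have "F differentiable_on U" and F1: "\<And>v. Ck_on 1 U (\<lambda>x. frechet_derivative F (at x) v)"
    using assms(2) by (simp_all add: numeral_2_eq_2)
  moreover have "continuous_on U (\<lambda>x. frechet_derivative F (at x) v)" for v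
    using F1[of v] by (simp add: differentiable_imp_continuous_on)
  ultimately have "Ck_on 1 U F" by (simp add: One_nat_def)
  then show "C1_on U F (\<lambda>x. frechet_derivative F (at x))"
    by (rule C1_on_if_Ck_on_1[OF assms(1)])
  show "C1_on U (\<lambda>y. frechet_derivative F (at y) v)
           (\<lambda>x. frechet_derivative (\<lambda>y. frechet_derivative F (at y) v) (at x))"
    using C1_on_if_Ck_on_1[OF assms(1) F1] .
qed

lemma C1_on_subset: "C1_on U f f' \<Longrightarrow> S \<subseteq> U \<Longrightarrow> C1_on S f f'"
  unfolding C1_on_def by (meson continuous_on_subset subsetD)

lemma C1_on_lincomb:
  fixes f g :: "'a::real_normed_vector \<Rightarrow> real"
  assumes "C1_on U f f'" "C1_on U g g'"
  shows "C1_on U (\<lambda>x. \<alpha> * f x + \<beta> * g x) (\<lambda>x h. \<alpha> * f' x h + \<beta> * g' x h)"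
  using assms unfolding C1_on_def
  by (auto intro!: derivative_eq_intros continuous_on_add continuous_on_mult_left)

lemma C1_on_inner_right: "C1_on U (\<lambda>x. v \<bullet> x) (\<lambda>x h. v \<bullet> h)"
  unfolding C1_on_def by (auto intro!: derivative_eq_intros)

lemma continuous_on_tendsto_nhds:
  fixes f :: "'a::t2_space \<Rightarrow> 'b::topological_space"
  assumes "continuous_on U f" "open U" "x \<in> U"
  shows "(f \<longlongrightarrow> f x) (nhds x)"
proof -
  have "isCont f x" using assms continuous_on_eq_continuous_at by blast
  then show ?thesis by (simp only: isCont_def tendsto_at_iff_tendsto_nhds)
qed

lemma linear_expand_Basis:
  fixes L :: "'a::euclidean_space \<Rightarrow> 'b::real_vector"
  assumes "linear L"
  shows "L h = (\<Sum>b\<in>Basis. (h \<bullet> b) *\<^sub>R L b)"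
proof -
  have "L h = L (\<Sum>b\<in>Basis. (h \<bullet> b) *\<^sub>R b)" by (simp add: euclidean_representation)
  also have "\<dots> = (\<Sum>b\<in>Basis. (h \<bullet> b) *\<^sub>R L b)"
    using assms by (simp add: linear_sum linear_scale)
  finally show ?thesis .
qed

lemma continuous_on_derivative_apply:
  fixes f' :: "'a::euclidean_space \<Rightarrow> 'a \<Rightarrow> 'b::real_normed_vector"
  assumes "C1_on U f f'" "continuous_on U Z"
  shows "continuous_on U (\<lambda>x. f' x (Z x))"
proof -
  have "continuous_on U (\<lambda>x. f' x b)" for b
    using assms(1) by (rule C1_on_continuous_on_derivative)
  then have "continuous_on U (\<lambda>x. \<Sum>b\<in>Basis. (Z x \<bullet> b) *\<^sub>R f' x b)"
    using assms(2) by (intro continuous_intros)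
  then show ?thesis
    by (rule continuous_on_eq) (metis C1_on_linear assms(1) linear_expand_Basis)
qed

lemma eventually_derivative_close:
  fixes f' :: "'a::euclidean_space \<Rightarrow> 'a \<Rightarrow> 'b::real_normed_vector"
  assumes f: "C1_on U f f'" and "open U" "x \<in> U" "e > 0"
  shows "\<forall>\<^sub>F y in nhds x. y \<in> U \<and> (\<forall>h. norm (f' y h - f' x h) \<le> e * norm h)"
proof -
  define \<delta> where "\<delta> = e / DIM('a)"
  have "\<delta> > 0" using \<open>e > 0\<close> by (simp add: \<delta>_def)
  have "\<forall>\<^sub>F y in nhds x. norm (f' y b - f' x b) < \<delta>" for b
    using tendstoD[OF continuous_on_tendsto_nhds[OF C1_on_continuous_on_derivative[OF f]] \<open>\<delta> > 0\<close>]
      assms by (simp add: dist_norm)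
  then have "\<forall>\<^sub>F y in nhds x. \<forall>b\<in>Basis. norm (f' y b - f' x b) < \<delta>"
    by (simp add: eventually_ball_finite)
  moreover have "\<forall>\<^sub>F y in nhds x. y \<in> U"
    using assms eventually_nhds by blast
  ultimately show ?thesis
  proof eventually_elim
    case (elim y)
    show ?case
    proof (intro conjI allI)
      fix h
      have "f' y h - f' x h = (\<Sum>b\<in>Basis. (h \<bullet> b) *\<^sub>R (f' y b - f' x b))"
        using linear_expand_Basis[OF C1_on_linear[OF f], of _ h] elim assms(3)
        by (simp add: scaleR_diff_right sum_subtractf)
      also have "norm \<dots> \<le> (\<Sum>b\<in>Basis. norm ((h \<bullet> b) *\<^sub>R (f' y b - f' x b)))"
        by (rule norm_sum)
      also have "\<dots> \<le> of_nat DIM('a) * (norm h * \<delta>)"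
      proof (rule sum_bounded_above)
        fix b :: 'a assume "b \<in> Basis"
        then show "norm ((h \<bullet> b) *\<^sub>R (f' y b - f' x b)) \<le> norm h * \<delta>"
          using elim Basis_le_norm[of b h] by (simp add: mult_mono less_imp_le)
      qed
      also have "\<dots> = e * norm h" by (simp add: \<delta>_def)
      finally show "norm (f' y h - f' x h) \<le> e * norm h" .
    qed (use elim in blast)
  qed
qed

section \<open>Second derivatives\<close>

lemma has_real_derivative_along_line:
  assumes "(f has_derivative f') (at (p + t *\<^sub>R u))"
  shows "((\<lambda>s. f (p + s *\<^sub>R u)) has_real_derivative f' u) (at t)"
proof -
  have "((\<lambda>s. p + s *\<^sub>R u) has_derivative (\<lambda>s. s *\<^sub>R u)) (at t)"
    by (auto intro!: derivative_eq_intros)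
  from has_derivative_compose[OF this assms]
  have "((\<lambda>s. f (p + s *\<^sub>R u)) has_derivative (\<lambda>s. f' (s *\<^sub>R u))) (at t)"
    by (simp add: o_def)
  moreover have "(\<lambda>s. f' (s *\<^sub>R u)) = (*) (f' u)"
    using has_derivative_linear[OF assms] by (auto simp: linear_scale mult.commute)
  ultimately show ?thesis by (simp add: has_field_derivative_def)
qed

lemma second_difference_mean_value:
  fixes f :: "'a::real_normed_vector \<Rightarrow> real"
  assumes U: "ball x d \<subseteq> U" and f: "C1_on U f f'" and f2: "\<And>v. C1_on U (\<lambda>y. f' y v) (f'' v)"
    and h: "h > 0" "h * (norm u + norm v) < d"
  shows "\<exists>y\<in>ball x d. f (x + h *\<^sub>R u + h *\<^sub>R v) - f (x + h *\<^sub>R u) - f (x + h *\<^sub>R v) + f x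
    = h * h * f'' u y v"
proof -
  have inb: "x + s *\<^sub>R u + t *\<^sub>R v \<in> ball x d" if "0 \<le> s" "s \<le> h" "0 \<le> t" "t \<le> h" for s t
  proof -
    have "norm (s *\<^sub>R u + t *\<^sub>R v) \<le> s * norm u + t * norm v"
      using that by (metis abs_of_nonneg norm_scaleR norm_triangle_ineq)
    also have "\<dots> \<le> h * norm u + h * norm v"
      using that by (intro add_mono mult_right_mono) auto
    finally have "norm (s *\<^sub>R u + t *\<^sub>R v) < d" using h by (simp add: distrib_left)
    moreover have "dist x (x + s *\<^sub>R u + t *\<^sub>R v) = norm (s *\<^sub>R u + t *\<^sub>R v)"
      by (metis dist_norm norm_minus_commute add_diff_cancel_left' add.assoc)
    ultimately show ?thesis by simp
  qed
  define \<phi> where "\<phi> s = f (x + s *\<^sub>R u + h *\<^sub>R v) - f (x + s *\<^sub>R u)" for s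
  have "(\<phi> has_real_derivative f' (x + s *\<^sub>R u + h *\<^sub>R v) u - f' (x + s *\<^sub>R u) u) (at s)"
    if "0 \<le> s" "s \<le> h" for s
  proof -
    have "(f has_derivative f' ((x + h *\<^sub>R v) + s *\<^sub>R u)) (at ((x + h *\<^sub>R v) + s *\<^sub>R u))"
      using C1_on_has_derivative[OF f] inb[of s h] that h U by (auto simp: algebra_simps)
    moreover have "(f has_derivative f' (x + s *\<^sub>R u)) (at (x + s *\<^sub>R u))"
      using C1_on_has_derivative[OF f] inb[of s 0] that h U by auto
    ultimately have "((\<lambda>s. f ((x + h *\<^sub>R v) + s *\<^sub>R u) - f (x + s *\<^sub>R u)) has_real_derivative
        f' ((x + h *\<^sub>R v) + s *\<^sub>R u) u - f' (x + s *\<^sub>R u) u) (at s)"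
      by (intro DERIV_diff has_real_derivative_along_line)
    then show ?thesis unfolding \<phi>_def by (simp add: algebra_simps)
  qed
  then obtain s1 where s1: "0 < s1" "s1 < h"
    "\<phi> h - \<phi> 0 = h * (f' (x + s1 *\<^sub>R u + h *\<^sub>R v) u - f' (x + s1 *\<^sub>R u) u)"
    using MVT2[of 0 h \<phi> "\<lambda>s. f' (x + s *\<^sub>R u + h *\<^sub>R v) u - f' (x + s *\<^sub>R u) u"] h by auto
  define \<psi> where "\<psi> t = f' (x + s1 *\<^sub>R u + t *\<^sub>R v) u" for t
  have "(\<psi> has_real_derivative f'' u (x + s1 *\<^sub>R u + t *\<^sub>R v) v) (at t)" if "0 \<le> t" "t \<le> h" for t
    unfolding \<psi>_def using C1_on_has_derivative[OF f2] inb[of s1 t] that s1 U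
    by (intro has_real_derivative_along_line) auto
  then obtain t1 where t1: "0 < t1" "t1 < h" "\<psi> h - \<psi> 0 = h * f'' u (x + s1 *\<^sub>R u + t1 *\<^sub>R v) v"
    using MVT2[of 0 h \<psi> "\<lambda>t. f'' u (x + s1 *\<^sub>R u + t *\<^sub>R v) v"] h by auto
  have "f (x + h *\<^sub>R u + h *\<^sub>R v) - f (x + h *\<^sub>R u) - f (x + h *\<^sub>R v) + f x = \<phi> h - \<phi> 0"
    by (simp add: \<phi>_def)
  also have "\<dots> = h * (\<psi> h - \<psi> 0)"
    using s1(3) by (simp add: \<psi>_def)
  also have "\<dots> = h * h * f'' u (x + s1 *\<^sub>R u + t1 *\<^sub>R v) v"
    using t1(3) by simp
  finally have "f (x + h *\<^sub>R u + h *\<^sub>R v) - f (x + h *\<^sub>R u) - f (x + h *\<^sub>R v) + f x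
    = h * h * f'' u (x + s1 *\<^sub>R u + t1 *\<^sub>R v) v" .
  moreover have "x + s1 *\<^sub>R u + t1 *\<^sub>R v \<in> ball x d"
    using inb[of s1 t1] s1 t1 by simp
  ultimately show ?thesis by blast
qed

lemma second_derivative_symmetric:
  fixes f :: "'a::real_normed_vector \<Rightarrow> real"
  assumes U: "open U" "x \<in> U" and f: "C1_on U f f'" and f2: "\<And>v. C1_on U (\<lambda>y. f' y v) (f'' v)"
  shows "f'' u x v = f'' v x u"
proof (rule ccontr)
  assume ne: "f'' u x v \<noteq> f'' v x u"
  define e where "e = \<bar>f'' u x v - f'' v x u\<bar> / 3"
  have e: "e > 0" using ne by (simp add: e_def)
  have "\<forall>\<^sub>F y in nhds x. dist (f'' u y v) (f'' u x v) < e \<and> dist (f'' v y u) (f'' v x u) < e \<and> y \<in> U"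
    using tendstoD[OF continuous_on_tendsto_nhds[OF C1_on_continuous_on_derivative[OF f2] U] e]
      eventually_nhds_in_open[OF U] by (auto simp: eventually_conj_iff)
  then obtain d where d: "d > 0"
    "\<And>y. y \<in> ball x d \<Longrightarrow> dist (f'' u y v) (f'' u x v) < e \<and> dist (f'' v y u) (f'' v x u) < e \<and> y \<in> U"
    unfolding eventually_nhds_metric by (auto simp: dist_commute)
  have ball: "ball x d \<subseteq> U" using d by blast
  define N where "N = norm u + norm v + 1"
  define h where "h = d / (2 * N)"
  have n: "N > 0" by (simp add: N_def add_nonneg_pos)
  then have "h > 0" using d(1) by (simp add: h_def)
  moreover have "h * (norm u + norm v) < d"
  proof -
    have "h * (norm u + norm v) \<le> h * N" using \<open>h > 0\<close> by (simp add: N_def)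
    also have "\<dots> = d / 2" using n by (simp add: h_def)
    finally show ?thesis using d(1) by simp
  qed
  ultimately have h: "h > 0" "h * (norm u + norm v) < d" by blast+
  obtain y1 where y1: "y1 \<in> ball x d"
    "f (x + h *\<^sub>R u + h *\<^sub>R v) - f (x + h *\<^sub>R u) - f (x + h *\<^sub>R v) + f x = h * h * f'' u y1 v"
    using second_difference_mean_value[OF ball f f2 h] by blast
  obtain y2 where y2: "y2 \<in> ball x d"
    "f (x + h *\<^sub>R v + h *\<^sub>R u) - f (x + h *\<^sub>R v) - f (x + h *\<^sub>R u) + f x = h * h * f'' v y2 u"
    using second_difference_mean_value[OF ball f f2 h(1), of v u] h(2) by (auto simp: add.commute)
  have "f'' u y1 v = f'' v y2 u"
    using y1(2) y2(2) h(1) by (simp add: algebra_simps)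
  then have "dist (f'' u y1 v) (f'' u x v) < e" "dist (f'' u y1 v) (f'' v x u) < e"
    using d(2)[OF y1(1)] d(2)[OF y2(1)] by simp_all
  moreover have "dist (f'' u x v) (f'' v x u) = 3 * e"
    by (simp add: e_def dist_real_def)
  ultimately show False
    using dist_triangle3[of "f'' u x v" "f'' v x u" "f'' u y1 v"] e by linarith
qed

lemma second_derivative_linear:
  fixes f :: "'a::real_normed_vector \<Rightarrow> 'b::real_normed_vector"
  assumes U: "open U" "x \<in> U" and f: "C1_on U f f'" and f2: "\<And>v. C1_on U (\<lambda>y. f' y v) (f'' v)"
  shows "linear (\<lambda>v. f'' v x h)"
proof -
  have unique: "f'' v x = D" if "((\<lambda>y. f' y v) has_derivative D) (at x)" for v D
    using has_derivative_unique[OF C1_on_has_derivative[OF f2 U(2)] that] .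
  have f2x: "((\<lambda>y. f' y v) has_derivative f'' v x) (at x)" for v
    using C1_on_has_derivative[OF f2 U(2)] .
  show ?thesis
  proof (rule linearI)
    fix u v
    have "((\<lambda>y. f' y u + f' y v) has_derivative (\<lambda>h. f'' u x h + f'' v x h)) (at x)"
      by (intro has_derivative_add f2x)
    then have "((\<lambda>y. f' y (u + v)) has_derivative (\<lambda>h. f'' u x h + f'' v x h)) (at x)"
      by (rule has_derivative_transform_within_open[OF _ U])
        (simp add: linear_add[OF C1_on_linear[OF f]])
    from unique[OF this] show "f'' (u + v) x h = f'' u x h + f'' v x h" by simp
  next
    fix c v
    have "((\<lambda>y. c *\<^sub>R f' y v) has_derivative (\<lambda>h. c *\<^sub>R f'' v x h)) (at x)"
      by (intro has_derivative_scaleR_right f2x)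
    then have "((\<lambda>y. f' y (c *\<^sub>R v)) has_derivative (\<lambda>h. c *\<^sub>R f'' v x h)) (at x)"
      by (rule has_derivative_transform_within_open[OF _ U])
        (simp add: linear_scale[OF C1_on_linear[OF f]])
    from unique[OF this] show "f'' (c *\<^sub>R v) x h = c *\<^sub>R f'' v x h" by simp
  qed
qed

lemma C1_on_derivative_along:
  fixes f :: "'a::euclidean_space \<Rightarrow> real" and X :: "'a \<Rightarrow> 'a"
  assumes U: "open U" and f: "C1_on U f f'" and f2: "\<And>v. C1_on U (\<lambda>y. f' y v) (f'' v)"
    and X: "C1_on U X X'"
  shows "C1_on U (\<lambda>x. f' x (X x)) (\<lambda>x h. f' x (X' x h) + f'' (X x) x h)"
  unfolding C1_on_def
proof (intro conjI ballI allI)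
  fix x assume x: "x \<in> U"
  define G where "G y = (\<Sum>b\<in>Basis. (X y \<bullet> b) * f' y b)" for y
  have "(G has_derivative (\<lambda>h. \<Sum>b\<in>Basis. (X x \<bullet> b) * f'' b x h + (X' x h \<bullet> b) * f' x b)) (at x)"
    unfolding G_def
    by (intro has_derivative_sum has_derivative_mult has_derivative_inner_left
        C1_on_has_derivative[OF X x] C1_on_has_derivative[OF f2 x])
  moreover have "(\<Sum>b\<in>Basis. (X x \<bullet> b) * f'' b x h + (X' x h \<bullet> b) * f' x b)
      = f' x (X' x h) + f'' (X x) x h" for h
    using linear_expand_Basis[OF C1_on_linear[OF f x], of "X' x h"]
      linear_expand_Basis[OF second_derivative_linear[OF U x f f2], of "X x"]
    by (simp add: sum.distrib add.commute mult.commute)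
  ultimately have "(G has_derivative (\<lambda>h. f' x (X' x h) + f'' (X x) x h)) (at x)"
    by simp
  then show "((\<lambda>x. f' x (X x)) has_derivative (\<lambda>h. f' x (X' x h) + f'' (X x) x h)) (at x)"
    by (rule has_derivative_transform_within_open[OF _ U x])
      (simp add: G_def linear_expand_Basis[OF C1_on_linear[OF f]])
next
  fix v
  have "continuous_on U (\<lambda>x. f'' b x v)" for b
    using f2 by (rule C1_on_continuous_on_derivative)
  then have "continuous_on U (\<lambda>x. \<Sum>b\<in>Basis. (X x \<bullet> b) * f'' b x v)"
    using C1_on_imp_continuous_on[OF X U] by (intro continuous_intros)
  then have "continuous_on U (\<lambda>x. f'' (X x) x v)"
    by (rule continuous_on_eq)
      (simp add: linear_expand_Basis[OF second_derivative_linear[OF U _ f f2]])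
  moreover have "continuous_on U (\<lambda>x. f' x (X' x v))"
    using f C1_on_continuous_on_derivative[OF X] by (rule continuous_on_derivative_apply)
  ultimately show "continuous_on U (\<lambda>x. f' x (X' x v) + f'' (X x) x v)"
    by (intro continuous_intros)
qed

lemma derivative_eq_0_if_vanishing:
  assumes "open U" "x \<in> U" "\<And>p. p \<in> U \<Longrightarrow> f p = 0" "(f has_derivative f') (at x)"
  shows "f' h = 0"
proof -
  have "(f has_derivative (\<lambda>h. 0)) (at x)"
    by (rule has_derivative_transform_within_open[OF has_derivative_const assms(1,2)])
      (simp add: assms(3))
  with assms(4) have "f' = (\<lambda>h. 0)"
    by (rule has_derivative_unique)
  then show ?thesis by simp
qed

section \<open>Local inverses and curves through charts\<close>

lemma continuous_within_linear_solution:
  fixes L :: "'c::t2_space \<Rightarrow> 'a::real_normed_vector \<Rightarrow> 'b::real_normed_vector"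
  assumes sol: "\<And>t. t \<in> S \<Longrightarrow> L t (k t) = k0"
    and below: "\<And>t h. t \<in> S \<Longrightarrow> c * norm h \<le> norm (L t h)" and "c > 0"
    and "t0 \<in> S" and "linear (L t0)"
    and near: "\<And>e. e > 0 \<Longrightarrow> \<forall>\<^sub>F t in at t0 within S. \<forall>h. norm (L t h - L t0 h) \<le> e * norm h"
  shows "continuous (at t0 within S) k"
  unfolding continuous_within
proof (rule tendstoI)
  fix e :: real assume "e > 0"
  define E where "E = e * c * c / (norm k0 + 1)"
  have "E > 0" using \<open>e > 0\<close> \<open>c > 0\<close> by (simp add: E_def add_nonneg_pos)
  have bound: "norm (k t) \<le> norm k0 / c" if "t \<in> S" for t
    using below[OF that, of "k t"] sol[OF that] \<open>c > 0\<close> by (simp add: field_simps)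
  have "\<forall>\<^sub>F t in at t0 within S. t \<in> S"
    by (simp add: eventually_at_filter)
  with near[OF \<open>E > 0\<close>] show "\<forall>\<^sub>F t in at t0 within S. dist (k t) (k t0) < e"
  proof eventually_elim
    case (elim t)
    have "L t0 (k t - k t0) = L t0 (k t) - L t (k t)"
      using sol[OF elim(2)] sol[OF \<open>t0 \<in> S\<close>] \<open>linear (L t0)\<close> by (simp add: linear_diff)
    then have "c * norm (k t - k t0) \<le> norm (L t (k t) - L t0 (k t))"
      using below[OF \<open>t0 \<in> S\<close>, of "k t - k t0"] by (simp add: norm_minus_commute)
    also have "\<dots> \<le> E * (norm k0 / c)"
      using elim(1) bound[OF elim(2)] \<open>E > 0\<close> by (meson mult_left_mono less_imp_le order_trans)
    also have "\<dots> = e * c * (norm k0 / (norm k0 + 1))"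
      using \<open>c > 0\<close> by (simp add: E_def field_simps)
    also have "\<dots> < e * c * 1"
    proof (intro mult_strict_left_mono)
      have "norm k0 + 1 > 0" by (metis norm_ge_zero add_nonneg_pos zero_less_one)
      then show "norm k0 / (norm k0 + 1) < 1" by simp
    qed (use \<open>e > 0\<close> \<open>c > 0\<close> in simp)
    finally show ?case
      using \<open>c > 0\<close> by (simp add: dist_norm mult.commute)
  qed
qed

text \<open>Continuity of \<open>g'\<close> comes from a uniform lower bound for \<open>f'\<close> near \<open>q\<close>.\<close>
lemma C1_on_local_inverse:
  fixes f :: "'a::euclidean_space \<Rightarrow> 'a"
  assumes U: "open U" "q \<in> U" and f: "C1_on U f f'" and inj: "inj (f' q)"
  obtains U' V g g' where "open U'" "q \<in> U'" "U' \<subseteq> U" "open V" "homeomorphism U' V f g"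
    "C1_on V g g'" "\<And>y k. y \<in> V \<Longrightarrow> f' (g y) (g' y k) = k"
proof -
  have lin: "linear (f' x)" if "x \<in> U" for x
    using C1_on_linear[OF f that] .
  obtain B where "B > 0" and B: "\<And>h. B * norm h \<le> norm (f' q h)"
    using linear_inj_bounded_below_pos[OF lin[OF U(2)] inj] by blast
  have "\<forall>\<^sub>F y in nhds q. y \<in> U \<and> (\<forall>h. norm (f' y h - f' q h) \<le> B / 2 * norm h)"
    using eventually_derivative_close[OF f U half_gt_zero[OF \<open>B > 0\<close>]] .
  then obtain r where "r > 0" and r: "\<And>y. y \<in> ball q r \<Longrightarrow> y \<in> U \<and> (\<forall>h. norm (f' y h - f' q h) \<le> B / 2 * norm h)"
    unfolding eventually_nhds_metric by (auto simp: dist_commute)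
  have below: "B / 2 * norm h \<le> norm (f' y h)" if "y \<in> ball q r" for y h
  proof -
    have "norm (f' y h - f' q h) \<le> B / 2 * norm h" using r[OF that] by blast
    then show ?thesis
      using B[of h] norm_triangle_ineq2[of "f' q h" "f' y h"] norm_minus_commute[of "f' q h" "f' y h"]
      by linarith
  qed
  have derf: "(f has_derivative blinfun_apply (Blinfun (f' x))) (at x)" if "x \<in> ball q r" for x
    using r[OF that] C1_on_has_derivative[OF f] lin
    by (simp add: bounded_linear_Blinfun_apply linear_conv_bounded_linear)
  have contf: "continuous_on (ball q r) (\<lambda>x. Blinfun (f' x))"
  proof (rule continuous_at_imp_continuous_on, rule ballI)
    fix x assume x: "x \<in> ball q r"
    have "((\<lambda>y. Blinfun (f' y)) \<longlongrightarrow> Blinfun (f' x)) (nhds x)"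
    proof (rule tendstoI)
      fix e :: real assume "e > 0"
      have "\<forall>\<^sub>F y in nhds x. y \<in> U \<and> (\<forall>h. norm (f' y h - f' x h) \<le> e / 2 * norm h)"
        using eventually_derivative_close[OF f U(1) conjunct1[OF r[OF x]] half_gt_zero[OF \<open>e > 0\<close>]] .
      then show "\<forall>\<^sub>F y in nhds x. dist (Blinfun (f' y)) (Blinfun (f' x)) < e"
      proof eventually_elim
        case (elim y)
        have "norm (Blinfun (f' y) - Blinfun (f' x)) \<le> e / 2"
          using elim \<open>e > 0\<close> lin r[OF x]
          by (intro norm_blinfun_bound)
            (auto simp: blinfun.diff_left bounded_linear_Blinfun_apply linear_conv_bounded_linear)
        then show ?case using \<open>e > 0\<close> by (simp add: dist_norm)
      qed
    qed
    then show "isCont (\<lambda>x. Blinfun (f' x)) x"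
      unfolding isCont_def using tendsto_at_iff_tendsto_nhds by blast
  qed
  obtain g0 where g0: "linear g0" "g0 \<circ> f' q = id"
    using linear_injective_left_inverse[OF lin[OF U(2)] inj] by blast
  have "bounded_linear g0" "bounded_linear (f' q)"
    using g0(1) lin[OF U(2)] by (simp_all add: linear_conv_bounded_linear)
  then have "Blinfun g0 o\<^sub>L Blinfun (f' q) = id_blinfun"
    by (intro blinfun_eqI) (simp add: bounded_linear_Blinfun_apply pointfree_idE[OF g0(2)])
  with inverse_function_theorem[OF open_ball derf contf centre_in_ball[THEN iffD2, OF \<open>r > 0\<close>]]
  obtain U' V g g' where "open U'" "U' \<subseteq> ball q r" "q \<in> U'" "open V" "f q \<in> V" and
    hom: "homeomorphism U' V f g" and
    g': "\<And>y. y \<in> V \<Longrightarrow> (g has_derivative g' y) (at y)"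
        "\<And>y. y \<in> V \<Longrightarrow> g' y = inv (blinfun_apply (Blinfun (f' (g y))))"
        "\<And>y. y \<in> V \<Longrightarrow> bij (blinfun_apply (Blinfun (f' (g y))))"
    by metis
  have gU': "g y \<in> U'" if "y \<in> V" for y
    using hom that unfolding homeomorphism_def by blast
  have inv: "f' (g y) (g' y k) = k" if "y \<in> V" for y k
  proof -
    have "blinfun_apply (Blinfun (f' (g y))) = f' (g y)"
      using gU'[OF that] \<open>U' \<subseteq> ball q r\<close> r lin
      by (auto simp: bounded_linear_Blinfun_apply linear_conv_bounded_linear)
    then show ?thesis
      using g'(2,3)[OF that] by (simp add: bij_is_surj surj_f_inv_f)
  qed
  have "continuous_on V (\<lambda>y. g' y k)" for k
  proof (rule continuous_on_eq_continuous_within[THEN iffD2], rule ballI)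
    fix y0 assume "y0 \<in> V"
    have cont_g: "continuous_on V g"
      using hom unfolding homeomorphism_def by blast
    show "continuous (at y0 within V) (\<lambda>y. g' y k)"
    proof (rule continuous_within_linear_solution[where L = "\<lambda>y. f' (g y)" and c = "B / 2"])
      show "\<And>y. y \<in> V \<Longrightarrow> f' (g y) (g' y k) = k" by (rule inv)
      show "\<And>y h. y \<in> V \<Longrightarrow> B / 2 * norm h \<le> norm (f' (g y) h)"
        using gU' \<open>U' \<subseteq> ball q r\<close> below by blast
      show "linear (f' (g y0))"
        using gU'[OF \<open>y0 \<in> V\<close>] \<open>U' \<subseteq> ball q r\<close> r lin by blast
      fix e :: real assume "e > 0"
      have "\<forall>\<^sub>F x in nhds (g y0). x \<in> U \<and> (\<forall>h. norm (f' x h - f' (g y0) h) \<le> e * norm h)"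
        using eventually_derivative_close[OF f U(1) _ \<open>e > 0\<close>] gU'[OF \<open>y0 \<in> V\<close>] \<open>U' \<subseteq> ball q r\<close> r
        by blast
      moreover have "(g \<longlongrightarrow> g y0) (at y0 within V)"
        using cont_g \<open>y0 \<in> V\<close> by (simp add: continuous_on_def)
      ultimately show "\<forall>\<^sub>F y in at y0 within V. \<forall>h. norm (f' (g y) h - f' (g y0) h) \<le> e * norm h"
        by (rule eventually_compose_filterlim[THEN eventually_mono]) blast
    qed (use \<open>B > 0\<close> \<open>y0 \<in> V\<close> in auto)
  qed
  then have "C1_on V g g'"
    using g'(1) by (simp add: C1_on_def)
  moreover have "U' \<subseteq> U"
    using \<open>U' \<subseteq> ball q r\<close> r by blast
  ultimately show ?thesis
    using that \<open>open U'\<close> \<open>q \<in> U'\<close> \<open>open V\<close> hom inv by blast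
qed

lemma C1_curve_through_chart:
  fixes P :: "'a::euclidean_space \<Rightarrow> 'a"
  assumes hom: "homeomorphism U' V P g" and "open V" and g: "C1_on V g g'"
    and inv: "\<And>y k. y \<in> V \<Longrightarrow> P' (g y) (g' y k) = k" and "q \<in> U'" "e \<noteq> 0"
  obtains \<epsilon> where "\<epsilon> > 0" "\<And>s. s \<in> {-\<epsilon><..<\<epsilon>} \<Longrightarrow> P q + s *\<^sub>R e \<in> V"
    "(\<lambda>s. g (P q + s *\<^sub>R e)) C1_differentiable_on {-\<epsilon><..<\<epsilon>}"
    "\<And>s. s \<in> {-\<epsilon><..<\<epsilon>} \<Longrightarrow> vector_derivative (\<lambda>s. g (P q + s *\<^sub>R e)) (at s) \<noteq> 0"
proof -
  define z where "z s = P q + s *\<^sub>R e" for s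
  have "P q \<in> V" using hom \<open>q \<in> U'\<close> unfolding homeomorphism_def by blast
  then obtain r where "r > 0" "ball (P q) r \<subseteq> V"
    using \<open>open V\<close> open_contains_ball by blast
  define \<epsilon> where "\<epsilon> = r / norm e"
  have "\<epsilon> > 0" using \<open>r > 0\<close> \<open>e \<noteq> 0\<close> by (simp add: \<epsilon>_def)
  have zV: "z s \<in> V" if "s \<in> {-\<epsilon><..<\<epsilon>}" for s
  proof -
    have "dist (P q) (z s) = \<bar>s\<bar> * norm e" by (simp add: z_def dist_norm)
    also have "\<dots> < \<epsilon> * norm e" using that \<open>e \<noteq> 0\<close> by (simp add: abs_less_iff)
    also have "\<dots> = r" using \<open>e \<noteq> 0\<close> by (simp add: \<epsilon>_def)
    finally show ?thesis using \<open>ball (P q) r \<subseteq> V\<close> by auto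
  qed
  have deriv: "((\<lambda>s. g (z s)) has_vector_derivative g' (z s) e) (at s)" if "s \<in> {-\<epsilon><..<\<epsilon>}" for s
  proof -
    have dg: "(g has_derivative g' (z s)) (at (z s))"
      using C1_on_has_derivative[OF g zV[OF that]] .
    have "(z has_derivative (\<lambda>h. h *\<^sub>R e)) (at s)"
      unfolding z_def by (auto intro!: derivative_eq_intros)
    from has_derivative_compose[OF this dg]
    have "((\<lambda>s. g (z s)) has_derivative (\<lambda>h. g' (z s) (h *\<^sub>R e))) (at s)"
      by (simp add: o_def)
    then show ?thesis
      using linear_scale[OF has_derivative_linear[OF dg]] by (simp add: has_vector_derivative_def)
  qed
  have "continuous_on {-\<epsilon><..<\<epsilon>} z"
    unfolding z_def by (intro continuous_intros)
  moreover have "z ` {-\<epsilon><..<\<epsilon>} \<subseteq> V" using zV by blast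
  ultimately have "continuous_on {-\<epsilon><..<\<epsilon>} (\<lambda>s. g' (z s) e)"
    by (rule continuous_on_compose2[OF C1_on_continuous_on_derivative[OF g, of e]])
  then have C1: "(\<lambda>s. g (z s)) C1_differentiable_on {-\<epsilon><..<\<epsilon>}"
    using deriv unfolding C1_differentiable_on_def by (intro exI[of _ "\<lambda>s. g' (z s) e"]) blast
  have nonzero: "vector_derivative (\<lambda>s. g (z s)) (at s) \<noteq> 0" if "s \<in> {-\<epsilon><..<\<epsilon>}" for s
  proof
    assume "vector_derivative (\<lambda>s. g (z s)) (at s) = 0"
    then have "g' (z s) e = 0"
      using vector_derivative_at[OF deriv[OF that]] by simp
    have "e = P' (g (z s)) (g' (z s) e)"
      using inv[OF zV[OF that]] by simp
    also have "\<dots> = P' (g (z s)) (g' (z s) 0)"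
      using \<open>g' (z s) e = 0\<close> linear_0[OF has_derivative_linear[OF C1_on_has_derivative[OF g zV[OF that]]]]
      by simp
    also have "\<dots> = 0"
      using inv[OF zV[OF that]] by simp
    finally show False using \<open>e \<noteq> 0\<close> by simp
  qed
  show ?thesis
  proof (rule that)
    show "\<epsilon> > 0" by fact
    show "\<And>s. s \<in> {-\<epsilon><..<\<epsilon>} \<Longrightarrow> P q + s *\<^sub>R e \<in> V"
      using zV unfolding z_def .
    show "(\<lambda>s. g (P q + s *\<^sub>R e)) C1_differentiable_on {-\<epsilon><..<\<epsilon>}"
      using C1 unfolding z_def .
    show "\<And>s. s \<in> {-\<epsilon><..<\<epsilon>} \<Longrightarrow> vector_derivative (\<lambda>s. g (P q + s *\<^sub>R e)) (at s) \<noteq> 0"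
      using nonzero unfolding z_def .
  qed
qed

lemma vector_3_eq_axis_sum:
  "(vector [a, b, c] :: real^3) = a *\<^sub>R axis 1 1 + b *\<^sub>R axis 2 1 + c *\<^sub>R axis 3 1"
  by (simp add: vec_eq_iff forall_3 axis_def)

lemma vector_3_eq_iff:
  "(vector [a, b, c] :: real^3) = vector [a', b', c'] \<longleftrightarrow> a = a' \<and> b = b' \<and> c = c'"
  by (simp add: vec_eq_iff forall_3)

lemma C1_on_vector_3:
  assumes "C1_on U f1 d1" "C1_on U f2 d2" "C1_on U f3 d3"
  shows "C1_on U (\<lambda>x. vector [f1 x, f2 x, f3 x] :: real^3) (\<lambda>x h. vector [d1 x h, d2 x h, d3 x h])"
  using assms unfolding C1_on_def vector_3_eq_axis_sum
  by (auto intro!: derivative_eq_intros continuous_on_add continuous_on_scaleR continuous_on_const)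

lemma linear_vector_3:
  assumes "linear l1" "linear l2" "linear l3"
  shows "linear (\<lambda>h. vector [l1 h, l2 h, l3 h] :: real^3)"
  using assms by (intro linearI) (simp_all add: vec_eq_iff forall_3 linear_add linear_scale)

lemma linear_system_2_unique:
  fixes d11 d12 d21 d22 t1 t2 :: real
  assumes eq: "d11 * t1 + d12 * t2 = 0" "d21 * t1 + d22 * t2 = 0" and det: "d11 * d22 - d12 * d21 \<noteq> 0"
  shows "t1 = 0" "t2 = 0"
proof -
  have "(d11 * d22 - d12 * d21) * t1 = d22 * (d11 * t1 + d12 * t2) - d12 * (d21 * t1 + d22 * t2)"
    by algebra
  also have "\<dots> = 0" by (simp only: eq mult_zero_right diff_zero)
  finally show "t1 = 0" using det by simp
  have "(d11 * d22 - d12 * d21) * t2 = d11 * (d21 * t1 + d22 * t2) - d21 * (d11 * t1 + d12 * t2)"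
    by algebra
  also have "\<dots> = 0" by (simp only: eq mult_zero_right diff_zero)
  finally show "t2 = 0" using det by simp
qed

lemma gram_determinant_pos:
  fixes u v :: "'a::real_inner"
  assumes indep: "\<And>a b. a *\<^sub>R u + b *\<^sub>R v = 0 \<Longrightarrow> a = 0 \<and> b = 0"
  shows "(u \<bullet> u) * (v \<bullet> v) - (u \<bullet> v)\<^sup>2 > 0"
proof -
  define z where "z = (u \<bullet> u) *\<^sub>R v - (u \<bullet> v) *\<^sub>R u"
  have "u \<noteq> 0"
  proof
    assume "u = 0"
    then have "1 *\<^sub>R u + 0 *\<^sub>R v = 0" by simp
    then show False using indep[of 1 0] by simp
  qed
  have "z \<noteq> 0"
  proof
    assume "z = 0"
    then have "(- (u \<bullet> v)) *\<^sub>R u + (u \<bullet> u) *\<^sub>R v = 0" by (simp add: z_def algebra_simps)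
    then have "u \<bullet> u = 0" using indep by blast
    then show False using \<open>u \<noteq> 0\<close> by simp
  qed
  then have "0 < z \<bullet> z" by simp
  also have "z \<bullet> z = (u \<bullet> u) * ((u \<bullet> u) * (v \<bullet> v) - (u \<bullet> v)\<^sup>2)"
    by (simp add: z_def inner_diff_left inner_diff_right inner_commute algebra_simps power2_eq_square)
  finally have "0 < (u \<bullet> u) * ((u \<bullet> u) * (v \<bullet> v) - (u \<bullet> v)\<^sup>2)" .
  moreover have "0 < u \<bullet> u" using \<open>u \<noteq> 0\<close> by simp
  ultimately show ?thesis by (rule zero_less_mult_pos)
qed

lemma continuous_on_frame_coefficients:
  fixes X1 X2 Y :: "'a::topological_space \<Rightarrow> 'b::real_inner"
  assumes cont: "continuous_on S X1" "continuous_on S X2" "continuous_on S Y"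
    and indep: "\<And>p a b. p \<in> S \<Longrightarrow> a *\<^sub>R X1 p + b *\<^sub>R X2 p = 0 \<Longrightarrow> a = 0 \<and> b = 0"
    and Y: "\<And>p. p \<in> S \<Longrightarrow> Y p = c1 p *\<^sub>R X1 p + c2 p *\<^sub>R X2 p"
  shows "continuous_on S c1" and "continuous_on S c2"
proof -
  define G where "G p = (X1 p \<bullet> X1 p) * (X2 p \<bullet> X2 p) - (X1 p \<bullet> X2 p)\<^sup>2" for p
  have G: "G p \<noteq> 0" if "p \<in> S" for p
  proof -
    have "G p > 0" unfolding G_def by (intro gram_determinant_pos indep[OF that])
    then show ?thesis by simp
  qed
  have i1: "X1 p \<bullet> Y p = c1 p * (X1 p \<bullet> X1 p) + c2 p * (X1 p \<bullet> X2 p)"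
    and i2: "X2 p \<bullet> Y p = c1 p * (X1 p \<bullet> X2 p) + c2 p * (X2 p \<bullet> X2 p)" if "p \<in> S" for p
    using Y[OF that] by (simp_all add: inner_add_right inner_commute)
  have "c1 p * G p = (X2 p \<bullet> X2 p) * (X1 p \<bullet> Y p) - (X1 p \<bullet> X2 p) * (X2 p \<bullet> Y p)" if "p \<in> S" for p
    unfolding i1[OF that] i2[OF that] G_def power2_eq_square by algebra
  then have c1: "c1 p = ((X2 p \<bullet> X2 p) * (X1 p \<bullet> Y p) - (X1 p \<bullet> X2 p) * (X2 p \<bullet> Y p)) / G p"
    if "p \<in> S" for p
    using G[OF that] that by (simp add: eq_divide_eq)
  have "c2 p * G p = (X1 p \<bullet> X1 p) * (X2 p \<bullet> Y p) - (X1 p \<bullet> X2 p) * (X1 p \<bullet> Y p)" if "p \<in> S" for p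
    unfolding i1[OF that] i2[OF that] G_def power2_eq_square by algebra
  then have c2: "c2 p = ((X1 p \<bullet> X1 p) * (X2 p \<bullet> Y p) - (X1 p \<bullet> X2 p) * (X1 p \<bullet> Y p)) / G p"
    if "p \<in> S" for p
    using G[OF that] that by (simp add: eq_divide_eq)
  have "continuous_on S (\<lambda>p. ((X2 p \<bullet> X2 p) * (X1 p \<bullet> Y p) - (X1 p \<bullet> X2 p) * (X2 p \<bullet> Y p)) / G p)"
    using G unfolding G_def by (intro continuous_intros cont) auto
  then show "continuous_on S c1"
    by (rule continuous_on_eq) (simp add: c1)
  have "continuous_on S (\<lambda>p. ((X1 p \<bullet> X1 p) * (X2 p \<bullet> Y p) - (X1 p \<bullet> X2 p) * (X1 p \<bullet> Y p)) / G p)"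
    using G unfolding G_def by (intro continuous_intros cont) auto
  then show "continuous_on S c2"
    by (rule continuous_on_eq) (simp add: c2)
qed

lemma singular_nonsymmetric_form_nonzero:
  fixes k11 k12 k21 k22 :: real
  assumes "k11 * k22 - k12 * k21 = 0" "k12 \<noteq> k21"
  shows "\<exists>x y. k11 * y\<^sup>2 + k22 * x\<^sup>2 - x * y * (k21 + k12) \<noteq> 0"
proof (rule ccontr)
  assume "\<not> ?thesis"
  then have form: "k11 * y\<^sup>2 + k22 * x\<^sup>2 - x * y * (k21 + k12) = 0" for x y
    by blast
  from form[of 1 0] form[of 0 1] form[of 1 1] have "k22 = 0" "k11 = 0" "k21 = - k12"
    by simp_all
  with assms(1) have "k12 = 0" by simp
  with \<open>k21 = - k12\<close> assms(2) show False by simp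
qed

lemma Delta_minimal_equation_along:
  fixes k11 k12 k21 k22 c1 c2 s x y a b :: real
  assumes ab: "a = s * x" "b = s * y" and "s \<noteq> 0" "x\<^sup>2 + y\<^sup>2 > 0"
    and eq: "(k11 * b\<^sup>2 + k22 * a\<^sup>2 - a * b * (k21 + k12)) / sqrt (a\<^sup>2 + b\<^sup>2) ^ 3
             + (c2 * a - c1 * b) / sqrt (a\<^sup>2 + b\<^sup>2) = 0"
  shows "k11 * y\<^sup>2 + k22 * x\<^sup>2 - x * y * (k21 + k12) + s * (x\<^sup>2 + y\<^sup>2) * (c2 * x - c1 * y) = 0"
proof -
  define D where "D = sqrt (a\<^sup>2 + b\<^sup>2)"
  have D2: "D\<^sup>2 = s\<^sup>2 * (x\<^sup>2 + y\<^sup>2)"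
    unfolding D_def ab by (simp add: power_mult_distrib algebra_simps)
  then have "D > 0"
    using \<open>s \<noteq> 0\<close> \<open>x\<^sup>2 + y\<^sup>2 > 0\<close> by (simp add: D_def)
  define N where "N = k11 * b\<^sup>2 + k22 * a\<^sup>2 - a * b * (k21 + k12)"
  define M where "M = c2 * a - c1 * b"
  have "N + D\<^sup>2 * M = (N / D ^ 3 + M / D) * D ^ 3"
    using \<open>D > 0\<close> by (simp add: field_simps power2_eq_square power3_eq_cube)
  also have "\<dots> = 0"
    using eq by (simp add: N_def M_def D_def)
  finally have "(k11 * b\<^sup>2 + k22 * a\<^sup>2 - a * b * (k21 + k12)) + D\<^sup>2 * (c2 * a - c1 * b) = 0"
    by (simp add: N_def M_def)
  then have "s\<^sup>2 * ((k11 * y\<^sup>2 + k22 * x\<^sup>2 - x * y * (k21 + k12)) + s * (x\<^sup>2 + y\<^sup>2) * (c2 * x - c1 * y)) = 0"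
    unfolding D2 ab by (simp add: power2_eq_square algebra_simps)
  then have "s\<^sup>2 = 0 \<or> k11 * y\<^sup>2 + k22 * x\<^sup>2 - x * y * (k21 + k12) + s * (x\<^sup>2 + y\<^sup>2) * (c2 * x - c1 * y) = 0"
    by (simp only: mult_eq_0_iff)
  then show ?thesis
    using \<open>s \<noteq> 0\<close> power_eq_0_iff[of s 2] by blast
qed

section \<open>Vector fields acting on functions\<close>

lemma C1_on_vf_apply:
  fixes F :: "real^3 \<Rightarrow> real"
  assumes U: "open U" and F: "Ck_on 2 U F" and X: "Ck_on 1 U X"
  shows "C1_on U (vf_apply X F) (\<lambda>p h. frechet_derivative F (at p) (frechet_derivative X (at p) h)
            + frechet_derivative (\<lambda>y. frechet_derivative F (at y) (X p)) (at p) h)"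
  unfolding vf_apply_def[abs_def]
  by (rule C1_on_derivative_along[OF U C1_on_if_Ck_on_2[OF U F] C1_on_if_Ck_on_1[OF U X]])

lemma vf_apply_vf_apply_eq:
  fixes F :: "real^3 \<Rightarrow> real"
  assumes U: "open U" "p \<in> U" and F: "Ck_on 2 U F" and X: "Ck_on 1 U X"
  shows "vf_apply Y (vf_apply X F) p = frechet_derivative F (at p) (frechet_derivative X (at p) (Y p))
            + frechet_derivative (\<lambda>y. frechet_derivative F (at y) (X p)) (at p) (Y p)"
  unfolding vf_apply_def[of Y]
  by (simp add: C1_on_frechet_derivative_eq[OF C1_on_vf_apply[OF U(1) F X] U(2)])

lemma continuous_on_vf_apply_vf_apply:
  fixes F :: "real^3 \<Rightarrow> real"
  assumes U: "open U" and F: "Ck_on 2 U F" and X: "Ck_on 1 U X" and Y: "continuous_on U Y"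
  shows "continuous_on U (vf_apply Y (vf_apply X F))"
proof -
  from C1_on_vf_apply[OF U F X] obtain D where D: "C1_on U (vf_apply X F) D" by blast
  have "continuous_on U (\<lambda>p. D p (Y p))"
    by (rule continuous_on_derivative_apply[OF D Y])
  then show ?thesis
    by (rule continuous_on_eq) (simp add: vf_apply_def[of Y] C1_on_frechet_derivative_eq[OF D])
qed

text \<open>Symmetry of the second derivative of \<open>F\<close> cancels the second-order terms, leaving
  \<open>F\<close> differentiated along the bracket.\<close>
lemma vf_apply_commutator:
  fixes F :: "real^3 \<Rightarrow> real"
  assumes U: "open U" "p \<in> U" and F: "Ck_on 2 U F" and X: "Ck_on 1 U X" and Y: "Ck_on 1 U Y"
  shows "vf_apply Y (vf_apply X F) p - vf_apply X (vf_apply Y F) p = vf_apply (lie_bracket Y X) F p"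
proof -
  let ?DF = "frechet_derivative F (at p)"
  let ?D2F = "\<lambda>v. frechet_derivative (\<lambda>y. frechet_derivative F (at y) v) (at p)"
  have "?D2F (X p) (Y p) = ?D2F (Y p) (X p)"
    using second_derivative_symmetric[OF U C1_on_if_Ck_on_2[OF U(1) F]] .
  moreover have "linear ?DF"
    using C1_on_linear[OF C1_on_if_Ck_on_2(1)[OF U(1) F] U(2)] .
  ultimately show ?thesis
    unfolding vf_apply_vf_apply_eq[OF U F X] vf_apply_vf_apply_eq[OF U F Y]
    by (simp add: vf_apply_def lie_bracket_def linear_diff)
qed

lemma vf_apply_eq_C1_derivative: "C1_on U f f' \<Longrightarrow> p \<in> U \<Longrightarrow> vf_apply Y f p = f' p (Y p)"
  unfolding vf_apply_def by (simp add: C1_on_frechet_derivative_eq)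

section \<open>\<open>\<Delta>\<close>-minimal surfaces near a characteristic point\<close>

locale Delta_minimal_surface =
  fixes U :: "(real^3) set"
    and X1 X2 X3 w :: "real^3 \<Rightarrow> real^3"
    and c1 c2 c3 F :: "real^3 \<Rightarrow> real"
  assumes U_open: "open U"
    and smooth: "smooth_on U X1" "smooth_on U X2" "smooth_on U X3" "smooth_on U w"
    and frame: "\<And>p a b. p \<in> U \<Longrightarrow> a *\<^sub>R X1 p + b *\<^sub>R X2 p = 0 \<Longrightarrow> a = 0 \<and> b = 0"
    and omega: "\<And>p. p \<in> U \<Longrightarrow> w p \<bullet> X1 p = 0 \<and> w p \<bullet> X2 p = 0 \<and> dform w p (X1 p) (X2 p) = 1"
    and reeb: "\<And>p. p \<in> U \<Longrightarrow> w p \<bullet> X3 p = 1 \<and> dform w p (X1 p) (X3 p) = 0 \<and> dform w p (X2 p) (X3 p) = 0"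
    and struct_fns: "\<And>p. p \<in> U \<Longrightarrow>
        lie_bracket X1 X2 p = - (c1 p *\<^sub>R X1 p + c2 p *\<^sub>R X2 p + c3 p *\<^sub>R X3 p)"
    and F_C2: "Ck_on 2 U F"
    and dF: "\<And>p. p \<in> U \<Longrightarrow> F p = 0 \<Longrightarrow> frechet_derivative F (at p) \<noteq> (\<lambda>v. 0)"
    and minimal: "Delta_minimal U X1 X2 c1 c2 F"
begin

abbreviation "DF p \<equiv> frechet_derivative F (at p)"
abbreviation "X1F \<equiv> vf_apply X1 F"
abbreviation "X2F \<equiv> vf_apply X2 F"

lemma Ck_on_1_fields: "Ck_on 1 U X1" "Ck_on 1 U X2" "Ck_on 1 U X3" "Ck_on 1 U w"
  using smooth unfolding smooth_on_def by blast+

lemma C1_on_F: "C1_on U F DF"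
  using C1_on_if_Ck_on_2(1)[OF U_open F_C2] .

lemma continuous_on_fields: "continuous_on U X1" "continuous_on U X2" "continuous_on U X3"
  using C1_on_imp_continuous_on[OF C1_on_if_Ck_on_1[OF U_open] U_open] Ck_on_1_fields by blast+

text \<open>Cartan's formula: \<open>d\<omega>(X\<^sub>1, X\<^sub>2) = -\<omega>([X\<^sub>1, X\<^sub>2])\<close>, since \<open>\<omega>(X\<^sub>1) = \<omega>(X\<^sub>2) = 0\<close>.\<close>
lemma c3_eq_1:
  assumes p: "p \<in> U"
  shows "c3 p = 1"
proof -
  let ?Dw = "frechet_derivative w (at p)"
  let ?DX1 = "frechet_derivative X1 (at p)" and ?DX2 = "frechet_derivative X2 (at p)"
  have C1: "C1_on U w (\<lambda>p. frechet_derivative w (at p))" "C1_on U X1 (\<lambda>p. frechet_derivative X1 (at p))"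
    "C1_on U X2 (\<lambda>p. frechet_derivative X2 (at p))"
    using C1_on_if_Ck_on_1[OF U_open] Ck_on_1_fields by blast+
  have d1: "?Dw h \<bullet> X1 p + w p \<bullet> ?DX1 h = 0" and d2: "?Dw h \<bullet> X2 p + w p \<bullet> ?DX2 h = 0" for h
    using derivative_eq_0_if_vanishing[OF U_open p _
        has_derivative_inner[OF C1_on_has_derivative[OF C1(1) p] C1_on_has_derivative[OF C1(2) p]]]
      derivative_eq_0_if_vanishing[OF U_open p _
        has_derivative_inner[OF C1_on_has_derivative[OF C1(1) p] C1_on_has_derivative[OF C1(3) p]]]
      omega by (simp_all add: add.commute)
  have "1 = ?Dw (X1 p) \<bullet> X2 p - ?Dw (X2 p) \<bullet> X1 p"
    using omega[OF p] by (simp add: dform_def)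
  also have "\<dots> = w p \<bullet> ?DX1 (X2 p) - w p \<bullet> ?DX2 (X1 p)"
    using d1[of "X2 p"] d2[of "X1 p"] by linarith
  also have "\<dots> = w p \<bullet> (- lie_bracket X1 X2 p)"
    by (simp add: lie_bracket_def inner_diff_right)
  also have "\<dots> = w p \<bullet> (c1 p *\<^sub>R X1 p + c2 p *\<^sub>R X2 p + c3 p *\<^sub>R X3 p)"
    by (subst struct_fns[OF p]) (simp add: algebra_simps)
  also have "\<dots> = c3 p"
    using omega[OF p] reeb[OF p] by (simp add: inner_add_right)
  finally show ?thesis by simp
qed

lemma frame_decomposition:
  assumes p: "p \<in> U"
  shows "\<exists>t1 t2. h = t1 *\<^sub>R X1 p + t2 *\<^sub>R X2 p + (w p \<bullet> h) *\<^sub>R X3 p"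
proof -
  define T where "T v = (v$1) *\<^sub>R X1 p + (v$2) *\<^sub>R X2 p + (v$3) *\<^sub>R X3 p" for v :: "real^3"
  have "linear T" unfolding T_def by (intro linearI) (auto simp: algebra_simps)
  have wT: "w p \<bullet> T v = v$3" for v
    using omega[OF p] reeb[OF p] by (simp add: T_def inner_add_right)
  have "v = 0" if "T v = 0" for v
  proof -
    have "v$3 = 0" using wT[of v] that by simp
    then have "(v$1) *\<^sub>R X1 p + (v$2) *\<^sub>R X2 p = 0" using that by (simp add: T_def)
    then have "v$1 = 0 \<and> v$2 = 0" using frame[OF p] by blast
    with \<open>v$3 = 0\<close> show ?thesis by (simp add: vec_eq_iff forall_3)
  qed
  then have "inj T"
    using \<open>linear T\<close> linear_injective_0 by blast
  then have "surj T"
    using \<open>linear T\<close> linear_injective_imp_surjective by blast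
  then obtain v where v: "h = T v" by (metis surjD)
  then have "w p \<bullet> h = v$3" using wT by simp
  then have "h = (v$1) *\<^sub>R X1 p + (v$2) *\<^sub>R X2 p + (w p \<bullet> h) *\<^sub>R X3 p"
    using v by (simp add: T_def)
  then show ?thesis by blast
qed

lemma DF_at_char_point:
  assumes q: "q \<in> char_points U X1 X2 F"
  shows "DF q h = (w q \<bullet> h) * DF q (X3 q)"
proof -
  have qU: "q \<in> U" using q by (simp add: char_points_def)
  obtain t1 t2 where h: "h = t1 *\<^sub>R X1 q + t2 *\<^sub>R X2 q + (w q \<bullet> h) *\<^sub>R X3 q"
    using frame_decomposition[OF qU] by blast
  have "linear (DF q)" using C1_on_linear[OF C1_on_F qU] .
  then have "DF q h = t1 * X1F q + t2 * X2F q + (w q \<bullet> h) * DF q (X3 q)"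
    by (subst h) (simp add: linear_add linear_scale vf_apply_def)
  then show ?thesis using q by (simp add: char_points_def)
qed

lemma DF_X3_at_char_point:
  assumes q: "q \<in> char_points U X1 X2 F"
  shows "DF q (X3 q) \<noteq> 0"
proof
  assume "DF q (X3 q) = 0"
  then have "DF q h = 0" for h
    using DF_at_char_point[OF q, of h] by (metis mult_zero_right)
  then have "DF q = (\<lambda>h. 0)" by blast
  then show False using dF q by (simp add: char_points_def)
qed

lemma commutator_at_char_point:
  assumes q: "q \<in> char_points U X1 X2 F"
  shows "vf_apply X2 X1F q - vf_apply X1 X2F q = DF q (X3 q)"
proof -
  have qU: "q \<in> U" using q by (simp add: char_points_def)
  have "lie_bracket X2 X1 q = - lie_bracket X1 X2 q"
    by (simp add: lie_bracket_def)
  also have "\<dots> = c1 q *\<^sub>R X1 q + c2 q *\<^sub>R X2 q + c3 q *\<^sub>R X3 q"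
    using struct_fns[OF qU] by simp
  finally have "lie_bracket X2 X1 q = c1 q *\<^sub>R X1 q + c2 q *\<^sub>R X2 q + c3 q *\<^sub>R X3 q" .
  moreover have "linear (DF q)" using C1_on_linear[OF C1_on_F qU] .
  ultimately have "vf_apply (lie_bracket X2 X1) F q = c1 q * X1F q + c2 q * X2F q + c3 q * DF q (X3 q)"
    by (simp add: vf_apply_def linear_add linear_scale)
  then show ?thesis
    using vf_apply_commutator[OF U_open qU F_C2 Ck_on_1_fields(1,2)] q c3_eq_1[OF qU]
    by (simp add: char_points_def)
qed

lemma continuous_on_structure_functions: "continuous_on U c1" "continuous_on U c2"
proof -
  have "continuous_on U (\<lambda>p. frechet_derivative X2 (at p) (X1 p) - frechet_derivative X1 (at p) (X2 p))"
    using continuous_on_derivative_apply C1_on_if_Ck_on_1[OF U_open] Ck_on_1_fields continuous_on_fields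
    by (intro continuous_on_diff) blast+
  then have cont: "continuous_on U (\<lambda>p. - lie_bracket X1 X2 p - X3 p)"
    by (intro continuous_intros continuous_on_fields) (simp add: lie_bracket_def[abs_def])
  have eq: "- lie_bracket X1 X2 p - X3 p = c1 p *\<^sub>R X1 p + c2 p *\<^sub>R X2 p" if "p \<in> U" for p
    using struct_fns[OF that] c3_eq_1[OF that] by simp
  show "continuous_on U c1"
    using continuous_on_fields(1,2) cont frame eq by (rule continuous_on_frame_coefficients(1))
  show "continuous_on U c2"
    using continuous_on_fields(1,2) cont frame eq by (rule continuous_on_frame_coefficients(2))
qed

lemma chart_derivative_injective:
  assumes q: "q \<in> char_points U X1 X2 F" and L: "linear L1" "linear L2"
    and det: "L1 (X1 q) * L2 (X2 q) - L1 (X2 q) * L2 (X1 q) \<noteq> 0"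
  shows "inj (\<lambda>h. vector [DF q h, L1 h, L2 h] :: real^3)"
proof -
  have qU: "q \<in> U" using q by (simp add: char_points_def)
  have "h = 0" if "vector [DF q h, L1 h, L2 h] = (0 :: real^3)" for h
  proof -
    have "DF q h = 0" "L1 h = 0" "L2 h = 0"
      using that by (simp_all add: vec_eq_iff forall_3)
    then have "w q \<bullet> h = 0"
      using DF_at_char_point[OF q, of h] DF_X3_at_char_point[OF q] by simp
    obtain t1 t2 where "h = t1 *\<^sub>R X1 q + t2 *\<^sub>R X2 q + (w q \<bullet> h) *\<^sub>R X3 q"
      using frame_decomposition[OF qU] by blast
    also have "\<dots> = t1 *\<^sub>R X1 q + t2 *\<^sub>R X2 q"
      using \<open>w q \<bullet> h = 0\<close> by simp
    finally have h: "h = t1 *\<^sub>R X1 q + t2 *\<^sub>R X2 q" .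
    have "L1 (X1 q) * t1 + L1 (X2 q) * t2 = 0" "L2 (X1 q) * t1 + L2 (X2 q) * t2 = 0"
      using \<open>L1 h = 0\<close> \<open>L2 h = 0\<close> L unfolding h by (simp_all add: linear_add linear_scale mult.commute)
    from linear_system_2_unique[OF this det] show "h = 0" using h by simp
  qed
  then show ?thesis
    using linear_vector_3[OF C1_on_linear[OF C1_on_F qU] L] linear_injective_0 by blast
qed

lemma char_point_isolated:
  assumes q: "q \<in> char_points U X1 X2 F"
    and det: "vf_apply X1 X1F q * vf_apply X2 X2F q - vf_apply X2 X1F q * vf_apply X1 X2F q \<noteq> 0"
  shows "\<not> q islimpt char_points U X1 X2 F"
proof
  assume limpt: "q islimpt char_points U X1 X2 F"
  have qU: "q \<in> U" using q by (simp add: char_points_def)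
  obtain D1 where D1: "C1_on U X1F D1"
    using C1_on_vf_apply[OF U_open F_C2 Ck_on_1_fields(1)] by blast
  obtain D2 where D2: "C1_on U X2F D2"
    using C1_on_vf_apply[OF U_open F_C2 Ck_on_1_fields(2)] by blast
  have "inj (\<lambda>h. vector [DF q h, D1 q h, D2 q h] :: real^3)"
    using chart_derivative_injective[OF q C1_on_linear[OF D1 qU] C1_on_linear[OF D2 qU]] det
    by (simp add: vf_apply_eq_C1_derivative[OF D1 qU] vf_apply_eq_C1_derivative[OF D2 qU])
  then show False
  proof (rule C1_on_local_inverse[OF U_open qU C1_on_vector_3[OF C1_on_F D1 D2]])
    fix U' V :: "(real^3) set" and g :: "real^3 \<Rightarrow> real^3" and g'
    assume "open U'" "q \<in> U'" "U' \<subseteq> U" "open V"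
      and hom: "homeomorphism U' V (\<lambda>x. vector [F x, X1F x, X2F x]) g"
    have inverse: "g (vector [F p, X1F p, X2F p]) = p" if "p \<in> U'" for p
      using hom that by (simp add: homeomorphism_def)
    obtain p where p: "p \<in> char_points U X1 X2 F" "p \<in> U'" "p \<noteq> q"
      using limpt \<open>open U'\<close> \<open>q \<in> U'\<close> unfolding islimpt_def by blast
    have "vector [F p, X1F p, X2F p] = (vector [F q, X1F q, X2F q] :: real^3)"
      using p(1) q by (simp add: char_points_def)
    then have "g (vector [F p, X1F p, X2F p]) = g (vector [F q, X1F q, X2F q])"
      by (rule arg_cong)
    then have "p = q"
      using inverse[OF p(2)] inverse[OF \<open>q \<in> U'\<close>] by simp
    with p(3) show False by simp
  qed
qed

text \<open>The numerator of the \<open>\<Delta>\<close>-minimality equation, with the horizontal gradient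
  \<open>(X\<^sub>1F, X\<^sub>2F)\<close> replaced by \<open>(x, y)\<close>.\<close>
definition minimal_form :: "real^3 \<Rightarrow> real \<Rightarrow> real \<Rightarrow> real" where
  "minimal_form p x y = vf_apply X1 X1F p * y\<^sup>2 + vf_apply X2 X2F p * x\<^sup>2
     - x * y * (vf_apply X1 X2F p + vf_apply X2 X1F p)"

lemma continuous_on_X1F_X2F: "continuous_on U X1F" "continuous_on U X2F"
  using C1_on_imp_continuous_on[OF C1_on_vf_apply[OF U_open F_C2] U_open] Ck_on_1_fields by blast+

lemma continuous_on_minimal_form: "continuous_on U (\<lambda>p. minimal_form p x y)"
  unfolding minimal_form_def
  by (intro continuous_intros continuous_on_vf_apply_vf_apply[OF U_open F_C2]
      Ck_on_1_fields continuous_on_fields)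

lemma minimal_form_bound:
  assumes p: "p \<in> U" "F p = 0" and along: "y * X1F p = x * X2F p" and xy: "x\<^sup>2 + y\<^sup>2 > 0"
    and grad: "X1F p \<noteq> 0 \<or> X2F p \<noteq> 0"
  shows "\<bar>minimal_form p x y\<bar> \<le> (x\<^sup>2 + y\<^sup>2) * ((\<bar>c1 p\<bar> + \<bar>c2 p\<bar>) * (\<bar>X1F p\<bar> + \<bar>X2F p\<bar>))"
proof -
  define s where "s = (x * X1F p + y * X2F p) / (x\<^sup>2 + y\<^sup>2)"
  have "X1F p * (x\<^sup>2 + y\<^sup>2) = x * (x * X1F p + y * X2F p)"
    "X2F p * (x\<^sup>2 + y\<^sup>2) = y * (x * X1F p + y * X2F p)"
    using along by (simp_all add: power2_eq_square algebra_simps)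
  then have a: "X1F p = s * x" and b: "X2F p = s * y"
    using xy by (simp_all add: s_def eq_divide_eq mult.commute sum_power2_gt_zero_iff)
  then have "s \<noteq> 0" using grad by auto
  have "sqrt ((X1F p)\<^sup>2 + (X2F p)\<^sup>2) \<noteq> 0" using grad by simp
  with minimal p have "(vf_apply X1 X1F p * (X2F p)\<^sup>2 + vf_apply X2 X2F p * (X1F p)\<^sup>2
        - X1F p * X2F p * (vf_apply X1 X2F p + vf_apply X2 X1F p)) / sqrt ((X1F p)\<^sup>2 + (X2F p)\<^sup>2) ^ 3
      + (c2 p * X1F p - c1 p * X2F p) / sqrt ((X1F p)\<^sup>2 + (X2F p)\<^sup>2) = 0"
    unfolding Delta_minimal_def Let_def by blast
  from Delta_minimal_equation_along[OF a b \<open>s \<noteq> 0\<close> xy this]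
  have "minimal_form p x y = - ((x\<^sup>2 + y\<^sup>2) * (c2 p * X1F p - c1 p * X2F p))"
    unfolding minimal_form_def a b by algebra
  then have "\<bar>minimal_form p x y\<bar> = (x\<^sup>2 + y\<^sup>2) * \<bar>c2 p * X1F p - c1 p * X2F p\<bar>"
    using xy by (simp add: abs_mult)
  also have "\<dots> \<le> (x\<^sup>2 + y\<^sup>2) * ((\<bar>c1 p\<bar> + \<bar>c2 p\<bar>) * (\<bar>X1F p\<bar> + \<bar>X2F p\<bar>))"
  proof (rule mult_left_mono)
    have "\<bar>c2 p * X1F p - c1 p * X2F p\<bar> \<le> \<bar>c2 p\<bar> * \<bar>X1F p\<bar> + \<bar>c1 p\<bar> * \<bar>X2F p\<bar>"
      by (metis abs_mult abs_triangle_ineq4)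
    moreover have "0 \<le> \<bar>c1 p\<bar> * \<bar>X1F p\<bar>" "0 \<le> \<bar>c2 p\<bar> * \<bar>X2F p\<bar>" by simp_all
    ultimately show "\<bar>c2 p * X1F p - c1 p * X2F p\<bar> \<le> (\<bar>c1 p\<bar> + \<bar>c2 p\<bar>) * (\<bar>X1F p\<bar> + \<bar>X2F p\<bar>)"
      unfolding distrib_left distrib_right by linarith
  qed (use xy in simp)
  finally show ?thesis .
qed

text \<open>On the ray through \<open>(x, y)\<close> the minimality equation makes \<open>minimal_form\<close> as small as the
  horizontal gradient, whereas near \<open>q\<close> it stays close to its nonzero value at \<open>q\<close>.\<close>
lemma eventually_gradient_not_along:
  assumes q: "q \<in> char_points U X1 X2 F" and Q: "minimal_form q x y \<noteq> 0"
  shows "\<forall>\<^sub>F p in nhds q. p \<in> U \<and> F p = 0 \<and> y * X1F p = x * X2F p \<longrightarrow> X1F p = 0 \<and> X2F p = 0"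
proof -
  have qU: "q \<in> U" and q0: "X1F q = 0" "X2F q = 0" using q by (simp_all add: char_points_def)
  have xy: "x\<^sup>2 + y\<^sup>2 > 0"
    using Q by (cases "x = 0 \<and> y = 0") (auto simp: minimal_form_def sum_power2_gt_zero_iff)
  define E where "E p = (x\<^sup>2 + y\<^sup>2) * ((\<bar>c1 p\<bar> + \<bar>c2 p\<bar>) * (\<bar>X1F p\<bar> + \<bar>X2F p\<bar>))" for p
  have "continuous_on U E"
    unfolding E_def
    by (intro continuous_intros continuous_on_structure_functions continuous_on_X1F_X2F)
  from continuous_on_tendsto_nhds[OF this U_open qU] have "(E \<longlongrightarrow> 0) (nhds q)"
    using q0 by (simp add: E_def)
  from order_tendstoD(2)[OF this, of "\<bar>minimal_form q x y\<bar> / 2"]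
  have "\<forall>\<^sub>F p in nhds q. E p < \<bar>minimal_form q x y\<bar> / 2"
    using Q by simp
  moreover have "\<forall>\<^sub>F p in nhds q. dist (minimal_form p x y) (minimal_form q x y) < \<bar>minimal_form q x y\<bar> / 2"
    using tendstoD[OF continuous_on_tendsto_nhds[OF continuous_on_minimal_form[of x y] U_open qU],
        of "\<bar>minimal_form q x y\<bar> / 2"] Q by simp
  ultimately show ?thesis
  proof eventually_elim
    case (elim p)
    show ?case
    proof (rule impI, rule ccontr)
      assume p: "p \<in> U \<and> F p = 0 \<and> y * X1F p = x * X2F p" and "\<not> (X1F p = 0 \<and> X2F p = 0)"
      then have "X1F p \<noteq> 0 \<or> X2F p \<noteq> 0" by blast
      with p have "\<bar>minimal_form p x y\<bar> \<le> E p"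
        unfolding E_def using minimal_form_bound xy by blast
      moreover have "\<bar>minimal_form q x y\<bar> - \<bar>minimal_form p x y\<bar> \<le> \<bar>minimal_form p x y - minimal_form q x y\<bar>"
        by (metis abs_minus_commute abs_triangle_ineq2)
      ultimately show False
        using elim by (simp add: dist_real_def)
    qed
  qed
qed

text \<open>\<open>(F, n, v \<bullet> _)\<close> is a chart for a suitable horizontal \<open>v\<close>, and the curve is a coordinate
  line of it.\<close>
lemma regular_curve_of_zeros:
  fixes n :: "real^3 \<Rightarrow> real"
  assumes q: "q \<in> char_points U X1 X2 F" and W: "open W" "q \<in> W"
    and n: "C1_on U n n'" "n q = 0" and transversal: "n' q (X1 q) \<noteq> 0 \<or> n' q (X2 q) \<noteq> 0"
  obtains V \<epsilon> \<gamma> where "open V" "q \<in> V" "V \<subseteq> U \<inter> W" "\<epsilon> > 0" "\<gamma> 0 = q"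
    "\<gamma> C1_differentiable_on {-\<epsilon><..<\<epsilon>}"
    "\<And>t. t \<in> {-\<epsilon><..<\<epsilon>} \<Longrightarrow> vector_derivative \<gamma> (at t) \<noteq> 0 \<and> \<gamma> t \<in> V \<and> F (\<gamma> t) = 0 \<and> n (\<gamma> t) = 0"
    "{p \<in> V. F p = 0 \<and> n p = 0} \<subseteq> \<gamma> ` {-\<epsilon><..<\<epsilon>}"
proof -
  have qU: "q \<in> U" and "F q = 0" using q by (simp_all add: char_points_def)
  define l1 where "l1 = n' q (X1 q)"
  define l2 where "l2 = n' q (X2 q)"
  define v where "v = l2 *\<^sub>R X1 q - l1 *\<^sub>R X2 q"
  have "v \<noteq> 0"
  proof
    assume "v = 0"
    then have "l2 *\<^sub>R X1 q + (- l1) *\<^sub>R X2 q = 0" by (simp add: v_def)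
    then have "l2 = 0 \<and> - l1 = 0" using frame[OF qU] by blast
    then show False using transversal by (simp add: l1_def l2_def)
  qed
  have "v \<bullet> v = v \<bullet> (l2 *\<^sub>R X1 q - l1 *\<^sub>R X2 q)" by (simp only: v_def)
  also have "\<dots> = l2 * (v \<bullet> X1 q) - l1 * (v \<bullet> X2 q)" by (simp add: inner_diff_right)
  finally have "l1 * (v \<bullet> X2 q) - l2 * (v \<bullet> X1 q) = - (v \<bullet> v)" by simp
  then have det: "n' q (X1 q) * (v \<bullet> X2 q) - n' q (X2 q) * (v \<bullet> X1 q) \<noteq> 0"
    using \<open>v \<noteq> 0\<close> unfolding l1_def l2_def by simp
  define P :: "real^3 \<Rightarrow> real^3" where "P p = vector [F p, n p, v \<bullet> p]" for p
  define P' :: "real^3 \<Rightarrow> real^3 \<Rightarrow> real^3" where "P' p h = vector [DF p h, n' p h, v \<bullet> h]" for p h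
  have "C1_on (U \<inter> W) P P'"
    unfolding P_def[abs_def] P'_def[abs_def]
    by (rule C1_on_subset[OF C1_on_vector_3[OF C1_on_F n(1) C1_on_inner_right]]) blast
  moreover have "inj (P' q)"
    unfolding P'_def using chart_derivative_injective[OF q C1_on_linear[OF n(1) qU]
        bounded_linear.linear[OF bounded_linear_inner_right] det] .
  ultimately obtain U' V g g' where "open U'" "q \<in> U'" "U' \<subseteq> U \<inter> W" "open V"
    and hom: "homeomorphism U' V P g" and "C1_on V g g'" and inv: "\<And>y k. y \<in> V \<Longrightarrow> P' (g y) (g' y k) = k"
    using C1_on_local_inverse[OF open_Int[OF U_open W(1)]] qU W(2) by (metis IntI)
  define e3 :: "real^3" where "e3 = axis 3 1"
  have "e3 \<noteq> 0" by (simp add: e3_def)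
  obtain \<epsilon> where "\<epsilon> > 0" and zV: "\<And>s. s \<in> {-\<epsilon><..<\<epsilon>} \<Longrightarrow> P q + s *\<^sub>R e3 \<in> V"
    and C1: "(\<lambda>s. g (P q + s *\<^sub>R e3)) C1_differentiable_on {-\<epsilon><..<\<epsilon>}"
    and nonzero: "\<And>s. s \<in> {-\<epsilon><..<\<epsilon>} \<Longrightarrow> vector_derivative (\<lambda>s. g (P q + s *\<^sub>R e3)) (at s) \<noteq> 0"
    using C1_curve_through_chart[OF hom \<open>open V\<close> \<open>C1_on V g g'\<close> inv \<open>q \<in> U'\<close> \<open>e3 \<noteq> 0\<close>] by blast
  define \<gamma> where "\<gamma> s = g (P q + s *\<^sub>R e3)" for s
  define V' where "V' = U' \<inter> {p. \<bar>v \<bullet> p - v \<bullet> q\<bar> < \<epsilon>}"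
  have line: "P q + s *\<^sub>R e3 = vector [0, 0, v \<bullet> q + s]" for s
    using \<open>F q = 0\<close> n(2) by (simp add: P_def e3_def vec_eq_iff forall_3 axis_def)
  have gP: "g (P p) = p" if "p \<in> U'" for p
    using hom that by (simp add: homeomorphism_def)
  have on_curve: "\<gamma> s \<in> V' \<and> F (\<gamma> s) = 0 \<and> n (\<gamma> s) = 0" if "s \<in> {-\<epsilon><..<\<epsilon>}" for s
  proof -
    have "\<gamma> s \<in> U'" and "P (\<gamma> s) = P q + s *\<^sub>R e3"
      using hom zV[OF that] by (auto simp: \<gamma>_def homeomorphism_def)
    moreover have "vector [F (\<gamma> s), n (\<gamma> s), v \<bullet> \<gamma> s] = (vector [0, 0, v \<bullet> q + s] :: real^3)"
      using \<open>P (\<gamma> s) = P q + s *\<^sub>R e3\<close> unfolding line by (simp add: P_def)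
    ultimately show ?thesis
      using that by (simp add: V'_def vector_3_eq_iff abs_less_iff)
  qed
  have cover: "{p \<in> V'. F p = 0 \<and> n p = 0} \<subseteq> \<gamma> ` {-\<epsilon><..<\<epsilon>}"
  proof
    fix p assume p: "p \<in> {p \<in> V'. F p = 0 \<and> n p = 0}"
    then have "P p = P q + (v \<bullet> p - v \<bullet> q) *\<^sub>R e3"
      unfolding line by (simp add: P_def vector_3_eq_iff)
    have "p = g (P p)"
      using gP p by (simp add: V'_def)
    also have "\<dots> = \<gamma> (v \<bullet> p - v \<bullet> q)"
      unfolding \<gamma>_def using \<open>P p = P q + (v \<bullet> p - v \<bullet> q) *\<^sub>R e3\<close> by (rule arg_cong)
    finally have "p = \<gamma> (v \<bullet> p - v \<bullet> q)" .
    moreover have "v \<bullet> p - v \<bullet> q \<in> {-\<epsilon><..<\<epsilon>}"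
      using p by (auto simp: V'_def abs_less_iff)
    ultimately show "p \<in> \<gamma> ` {-\<epsilon><..<\<epsilon>}" by blast
  qed
  have "open V'"
    unfolding V'_def
    by (intro open_Int \<open>open U'\<close> open_Collect_less continuous_intros)
  moreover have "q \<in> V'" "V' \<subseteq> U \<inter> W"
    using \<open>q \<in> U'\<close> \<open>\<epsilon> > 0\<close> \<open>U' \<subseteq> U \<inter> W\<close> by (auto simp: V'_def)
  moreover have "\<gamma> 0 = q"
    using gP[OF \<open>q \<in> U'\<close>] by (simp add: \<gamma>_def)
  ultimately show ?thesis
    using that[of V' \<epsilon> \<gamma>] \<open>\<epsilon> > 0\<close> C1 nonzero on_curve cover unfolding \<gamma>_def by blast
qed

lemma char_points_curve:
  assumes q: "q \<in> char_points U X1 X2 F" and Q: "minimal_form q x y \<noteq> 0"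
  shows "\<exists>V e \<gamma>. open V \<and> q \<in> V \<and> e > 0 \<and> \<gamma> 0 = q
           \<and> \<gamma> C1_differentiable_on {-e<..<e}
           \<and> (\<forall>t\<in>{-e<..<e}. vector_derivative \<gamma> (at t) \<noteq> 0 \<and> \<gamma> t \<in> char_points U X1 X2 F)
           \<and> char_points U X1 X2 F \<inter> V \<subseteq> \<gamma> ` {-e<..<e}"
proof -
  have qU: "q \<in> U" using q by (simp add: char_points_def)
  obtain \<rho> where "\<rho> > 0" and not_along:
    "\<forall>p. dist p q < \<rho> \<longrightarrow> p \<in> U \<and> F p = 0 \<and> y * X1F p = x * X2F p \<longrightarrow> X1F p = 0 \<and> X2F p = 0"
    using eventually_gradient_not_along[OF q Q] unfolding eventually_nhds_metric by blast
  obtain D1 where D1: "C1_on U X1F D1"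
    using C1_on_vf_apply[OF U_open F_C2 Ck_on_1_fields(1)] by blast
  obtain D2 where D2: "C1_on U X2F D2"
    using C1_on_vf_apply[OF U_open F_C2 Ck_on_1_fields(2)] by blast
  define n where "n p = y * X1F p + (- x) * X2F p" for p
  have n: "C1_on U n (\<lambda>p h. y * D1 p h + (- x) * D2 p h)"
    unfolding n_def[abs_def] by (rule C1_on_lincomb[OF D1 D2])
  have "n q = 0" using q by (simp add: n_def char_points_def)
  have "minimal_form q x y
      = y * (y * D1 q (X1 q) + - x * D2 q (X1 q)) - x * (y * D1 q (X2 q) + - x * D2 q (X2 q))"
    by (simp add: minimal_form_def vf_apply_eq_C1_derivative[OF D1 qU] vf_apply_eq_C1_derivative[OF D2 qU]
        power2_eq_square algebra_simps)
  then have transversal: "y * D1 q (X1 q) + - x * D2 q (X1 q) \<noteq> 0 \<or> y * D1 q (X2 q) + - x * D2 q (X2 q) \<noteq> 0"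
    using Q by auto
  obtain V \<epsilon> \<gamma> where "open V" "q \<in> V" "V \<subseteq> U \<inter> ball q \<rho>" "\<epsilon> > 0" "\<gamma> 0 = q"
    "\<gamma> C1_differentiable_on {-\<epsilon><..<\<epsilon>}"
    and curve: "\<And>t. t \<in> {-\<epsilon><..<\<epsilon>} \<Longrightarrow>
        vector_derivative \<gamma> (at t) \<noteq> 0 \<and> \<gamma> t \<in> V \<and> F (\<gamma> t) = 0 \<and> n (\<gamma> t) = 0"
    and cover: "{p \<in> V. F p = 0 \<and> n p = 0} \<subseteq> \<gamma> ` {-\<epsilon><..<\<epsilon>}"
    by (rule regular_curve_of_zeros[OF q open_ball centre_in_ball[THEN iffD2, OF \<open>\<rho> > 0\<close>]
          n \<open>n q = 0\<close> transversal], rule that, assumption+)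
  have "\<gamma> t \<in> char_points U X1 X2 F" if "t \<in> {-\<epsilon><..<\<epsilon>}" for t
  proof -
    have "\<gamma> t \<in> U" "dist (\<gamma> t) q < \<rho>" "F (\<gamma> t) = 0" "y * X1F (\<gamma> t) = x * X2F (\<gamma> t)"
      using curve[OF that] \<open>V \<subseteq> U \<inter> ball q \<rho>\<close> by (auto simp: n_def dist_commute)
    then show ?thesis
      using not_along by (simp add: char_points_def)
  qed
  moreover have "char_points U X1 X2 F \<inter> V \<subseteq> \<gamma> ` {-\<epsilon><..<\<epsilon>}"
    using cover by (auto simp: char_points_def n_def)
  ultimately show ?thesis
    using \<open>open V\<close> \<open>q \<in> V\<close> \<open>\<epsilon> > 0\<close> \<open>\<gamma> 0 = q\<close> \<open>\<gamma> C1_differentiable_on {-\<epsilon><..<\<epsilon>}\<close> curve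
    by blast
qed

lemma char_point_isolated_or_on_curve:
  assumes q: "q \<in> char_points U X1 X2 F"
  shows "\<not> q islimpt (char_points U X1 X2 F)
         \<or> (\<exists>V e \<gamma>. open V \<and> q \<in> V \<and> e > 0 \<and> \<gamma> 0 = q
              \<and> \<gamma> C1_differentiable_on {-e<..<e}
              \<and> (\<forall>t\<in>{-e<..<e}. vector_derivative \<gamma> (at t) \<noteq> 0 \<and> \<gamma> t \<in> char_points U X1 X2 F)
              \<and> char_points U X1 X2 F \<inter> V \<subseteq> \<gamma> ` {-e<..<e})"
proof -
  let ?K11 = "vf_apply X1 X1F q" and ?K12 = "vf_apply X2 X1F q"
    and ?K21 = "vf_apply X1 X2F q" and ?K22 = "vf_apply X2 X2F q"
  show ?thesis
  proof (cases "?K11 * ?K22 - ?K12 * ?K21 = 0")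
    case True
    have "?K12 \<noteq> ?K21"
      using commutator_at_char_point[OF q] DF_X3_at_char_point[OF q] by simp
    then obtain x y where "minimal_form q x y \<noteq> 0"
      using singular_nonsymmetric_form_nonzero[OF True] by (auto simp: minimal_form_def)
    then show ?thesis using char_points_curve[OF q] by blast
  next
    case False
    then show ?thesis using char_point_isolated[OF q] by blast
  qed
qed

end

theorem mainTheorem8:
  fixes U :: "(real^3) set"
    and X1 X2 X3 w :: "real^3 \<Rightarrow> real^3"
    and c1 c2 c3 F :: "real^3 \<Rightarrow> real"
  assumes U_open: "open U"
    and smooth: "smooth_on U X1" "smooth_on U X2" "smooth_on U X3" "smooth_on U w"
    and frame: "\<And>p a b. p \<in> U \<Longrightarrow> a *\<^sub>R X1 p + b *\<^sub>R X2 p = 0 \<Longrightarrow> a = 0 \<and> b = 0"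
    and omega: "\<And>p. p \<in> U \<Longrightarrow> w p \<bullet> X1 p = 0 \<and> w p \<bullet> X2 p = 0 \<and> dform w p (X1 p) (X2 p) = 1"
    and reeb: "\<And>p. p \<in> U \<Longrightarrow> w p \<bullet> X3 p = 1 \<and> dform w p (X1 p) (X3 p) = 0 \<and> dform w p (X2 p) (X3 p) = 0"
    and struct_fns: "\<And>p. p \<in> U \<Longrightarrow>
        lie_bracket X1 X2 p = - (c1 p *\<^sub>R X1 p + c2 p *\<^sub>R X2 p + c3 p *\<^sub>R X3 p)"
    and F_C2: "Ck_on 2 U F"
    and dF: "\<And>p. p \<in> U \<Longrightarrow> F p = 0 \<Longrightarrow> frechet_derivative F (at p) \<noteq> (\<lambda>v. 0)"
    and minimal: "Delta_minimal U X1 X2 c1 c2 F"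
  shows "\<forall>q \<in> char_points U X1 X2 F.
           \<not> q islimpt (char_points U X1 X2 F)
         \<or> (\<exists>V e \<gamma>. open V \<and> q \<in> V \<and> e > 0 \<and> \<gamma> 0 = q
              \<and> \<gamma> C1_differentiable_on {-e<..<e}
              \<and> (\<forall>t\<in>{-e<..<e}. vector_derivative \<gamma> (at t) \<noteq> 0
                                 \<and> \<gamma> t \<in> char_points U X1 X2 F)
              \<and> char_points U X1 X2 F \<inter> V \<subseteq> \<gamma> ` {-e<..<e})"
proof -
  interpret Delta_minimal_surface U X1 X2 X3 w c1 c2 c3 F
    by unfold_locales (fact assms)+
  show ?thesis
    using char_point_isolated_or_on_curve by blast
qed

end
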